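(* Let $G$ be a simple graph of order $n$ with adjacency eigenvalues $\lambda_1,\lambda_2,\dots,\lambda_n$ (listed with multiplicity), and let $G^l$ be the graph obtained from $G$ by adding a loop on each vertex of $G$. Let $(G\cup G^l)_n$ denote the disjoint union of $G$ and $G^l$, a graph of order $2n$ with exactly $n$ self-loops. If $|\lambda_i|\ge \frac12$ for each $i=1,2,\dots,n$, then $E\big((G\cup G^l)_n\big)=2E(G)$.
   Context: For a simple graph $G$ with adjacency matrix $A(G)$ and eigenvalues $\lambda_1,\dots,\lambda_n$, the energy is $E(G)=\sum_{i=1}^n|\lambda_i|$. For a graph $G_\sigma$ of order $N$ obtained from a simple graph by attaching self-loops on $\sigma$ of its vertices, the adjacency matrix is $A(G_\sigma)=A(G)+I_\sigma$, where $I_\sigma$ is the $N\times N$ diagonal matrix with exactly $\sigma$ ones on the diagonal (at the looped vertices) and zeros elsewhere; if $\mu_1,\dots,\mu_N$ are the eigenvalues of $A(G_\sigma)$, its energy is $E(G_\sigma)=\sum_{i=1}^N\left|\mu_i-\frac{\sigma}{N}\right|$. The subscript in $(G\cup G^l)_n$ indicates the number of loops $\sigma=n$. *)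

theory Defs
  imports "Jordan_Normal_Form.Char_Poly" "HOL-Computational_Algebra.Polynomial"
begin

definition simple_graph :: "nat \<Rightarrow> (nat \<Rightarrow> nat \<Rightarrow> bool) \<Rightarrow> bool" where
  "simple_graph n E \<longleftrightarrow> (\<forall>i<n. \<forall>j<n. E i j = E j i) \<and> (\<forall>i<n. \<not> E i i)"

definition adj_mat :: "nat \<Rightarrow> (nat \<Rightarrow> nat \<Rightarrow> bool) \<Rightarrow> real mat" where
  "adj_mat n E = mat n n (\<lambda>(i,j). if E i j then 1 else 0)"

definition eigenvalues_mset :: "real mat \<Rightarrow> complex multiset" where
  "eigenvalues_mset M = proots (char_poly (map_mat complex_of_real M))"

definition energy :: "real mat \<Rightarrow> real" where
  "energy M = (\<Sum>\<mu>\<in>#eigenvalues_mset M. cmod \<mu>)"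

text \<open>Energy of a graph of order N = dim M with \<sigma> self-loops: sum of |\<mu>_i - \<sigma>/N|.\<close>
definition loop_energy :: "real mat \<Rightarrow> nat \<Rightarrow> real" where
  "loop_energy M \<sigma> = (\<Sum>\<mu>\<in>#eigenvalues_mset M. cmod (\<mu> - of_real (real \<sigma> / real (dim_row M))))"

text \<open>Adjacency matrix of the disjoint union G \<union> G^l (vertices 0..<n form G, n..<2n form G^l,
  which carries a loop at every vertex): A(G) \<oplus> (A(G) + I).\<close>
definition union_loop_adj :: "nat \<Rightarrow> (nat \<Rightarrow> nat \<Rightarrow> bool) \<Rightarrow> real mat" where
  "union_loop_adj n E = four_block_mat (adj_mat n E) (0\<^sub>m n n) (0\<^sub>m n n) (adj_mat n E + 1\<^sub>m n)"

end

theory Submission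
  imports Defs
begin

(*
  The adjacency matrix of the union is block diagonal with blocks A(G) and A(G) + I, so its
  spectrum consists of the \<lambda>\<^sub>i together with the \<lambda>\<^sub>i + 1, and the shift \<sigma>/N equals 1/2.
  Hence the energy of the union is the sum of |\<lambda>\<^sub>i - 1/2| + |\<lambda>\<^sub>i + 1/2|.  Since A(G) is
  real symmetric, the \<lambda>\<^sub>i are real, and for real x one has |x - 1/2| + |x + 1/2| = 2 max(|x|, 1/2),
  which is 2|\<lambda>\<^sub>i| under the hypothesis |\<lambda>\<^sub>i| \<ge> 1/2.
*)

lemma proots_linear_factors: "proots (\<Prod>a\<leftarrow>as. [:-a, 1:]) = mset as"
proof (induction as)
  case (Cons a as)
  have "(\<Prod>a\<leftarrow>as. [:-a, 1:]) \<noteq> 0"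
    by (auto simp: prod_list_zero_iff)
  with Cons show ?case
    by (simp add: proots_mult del: mult_pCons_left)
qed simp

lemma proots_pcompose_shift:
  fixes p :: "complex poly"
  shows "proots (p \<circ>\<^sub>p [:-c, 1:]) = image_mset (\<lambda>a. a + c) (proots p)"
proof (cases "p = 0")
  case False
  then have lc: "lead_coeff p \<noteq> 0"
    by simp
  obtain as where p: "p = Polynomial.smult (lead_coeff p) (\<Prod>a\<leftarrow>as. [:-a, 1:])"
    using fundamental_theorem_algebra_factorized[of p] by metis
  have shift: "(\<Prod>a\<leftarrow>as. [:-a, 1:]) \<circ>\<^sub>p [:-c, 1:] = (\<Prod>a\<leftarrow>map (\<lambda>a. a + c) as. [:-a, 1:])"
    by (induction as) (simp_all add: pcompose_mult pcompose_pCons del: mult_pCons_left)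
  have "proots p = mset as"
    by (subst p) (simp only: proots_smult[OF lc] proots_linear_factors)
  moreover have "proots (p \<circ>\<^sub>p [:-c, 1:]) = mset (map (\<lambda>a. a + c) as)"
    by (subst p) (simp only: pcompose_smult shift proots_smult[OF lc] proots_linear_factors)
  ultimately show ?thesis
    by simp
qed simp

lemma char_poly_nonzero:
  fixes A :: "'a::comm_ring_1 mat"
  assumes "A \<in> carrier_mat n n"
  shows "char_poly A \<noteq> 0"
  using degree_monic_char_poly[OF assms] by auto

lemma char_poly_four_block_diag:
  fixes A B :: "'a::idom mat"
  assumes "A \<in> carrier_mat n n" and "B \<in> carrier_mat m m"
  shows "char_poly (four_block_mat A (0\<^sub>m n m) (0\<^sub>m m n) B) = char_poly A * char_poly B"
proof -
  have "char_poly_matrix (four_block_mat A (0\<^sub>m n m) (0\<^sub>m m n) B) =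
      four_block_mat (char_poly_matrix A) (0\<^sub>m n m) (0\<^sub>m m n) (char_poly_matrix B)"
    using assms by (intro eq_matI) (auto simp: char_poly_matrix_def)
  then show ?thesis
    using assms by (simp add: char_poly_def det_four_block_mat_upper_right_zero[of _ n _ m])
qed

lemma char_poly_add_scalar_mat:
  fixes A :: "'a::field_char_0 mat"
  assumes A: "A \<in> carrier_mat n n"
  shows "char_poly (A + c \<cdot>\<^sub>m 1\<^sub>m n) = char_poly A \<circ>\<^sub>p [:-c, 1:]"
proof (rule poly_eq_poly_eq_iff[THEN iffD1, OF ext])
  fix x
  have "char_matrix (A + c \<cdot>\<^sub>m 1\<^sub>m n) x = char_matrix A (x - c)"
    using A by (intro eq_matI) (auto simp: char_matrix_def)
  then show "poly (char_poly (A + c \<cdot>\<^sub>m 1\<^sub>m n)) x = poly (char_poly A \<circ>\<^sub>p [:-c, 1:]) x"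
    using A char_poly_matrix[of "A + c \<cdot>\<^sub>m 1\<^sub>m n" n x] char_poly_matrix[OF A, of "x - c"]
    by (simp add: poly_pcompose)
qed

lemma eigenvalues_mset_four_block_diag:
  assumes A: "A \<in> carrier_mat n n" and B: "B \<in> carrier_mat m m"
  shows "eigenvalues_mset (four_block_mat A (0\<^sub>m n m) (0\<^sub>m m n) B) =
    eigenvalues_mset A + eigenvalues_mset B"
proof -
  let ?Ac = "map_mat complex_of_real A" and ?Bc = "map_mat complex_of_real B"
  have "map_mat complex_of_real (four_block_mat A (0\<^sub>m n m) (0\<^sub>m m n) B) =
      four_block_mat ?Ac (0\<^sub>m n m) (0\<^sub>m m n) ?Bc"
    using A B by (intro eq_matI) auto
  moreover have "?Ac \<in> carrier_mat n n" "?Bc \<in> carrier_mat m m"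
    using A B by auto
  ultimately show ?thesis
    unfolding eigenvalues_mset_def
    by (simp add: char_poly_four_block_diag proots_mult char_poly_nonzero)
qed

lemma eigenvalues_mset_add_scalar_mat:
  assumes A: "A \<in> carrier_mat n n"
  shows "eigenvalues_mset (A + c \<cdot>\<^sub>m 1\<^sub>m n) = image_mset (\<lambda>a. a + of_real c) (eigenvalues_mset A)"
proof -
  let ?Ac = "map_mat complex_of_real A"
  have "map_mat complex_of_real (A + c \<cdot>\<^sub>m 1\<^sub>m n) = ?Ac + of_real c \<cdot>\<^sub>m 1\<^sub>m n"
    using A by (intro eq_matI) auto
  moreover have "?Ac \<in> carrier_mat n n"
    using A by simp
  ultimately show ?thesis
    unfolding eigenvalues_mset_def by (simp add: char_poly_add_scalar_mat proots_pcompose_shift)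
qed

lemma size_eigenvalues_mset:
  assumes "A \<in> carrier_mat n n"
  shows "size (eigenvalues_mset A) = n"
  using degree_monic_char_poly[of "map_mat complex_of_real A" n] assms
  by (simp add: eigenvalues_mset_def size_proots_complex)

lemma eigenvalues_mset_symmetric_real:
  assumes A: "A \<in> carrier_mat n n" and sym: "transpose_mat A = A"
    and a: "a \<in># eigenvalues_mset A"
  shows "a \<in> \<real>"
proof -
  let ?B = "map_mat complex_of_real A"
  have "eigenvalue ?B a"
    using a A by (simp add: eigenvalues_mset_def eigenvalue_root_char_poly[of _ n] char_poly_nonzero)
  then obtain v where v: "v \<in> carrier_vec n" "v \<noteq> 0\<^sub>v n" and Bv: "?B *\<^sub>v v = a \<cdot>\<^sub>v v"
    using A unfolding eigenvalue_def eigenvector_def by auto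
  have B: "?B \<in> carrier_mat n n" and Bt: "transpose_mat ?B = ?B"
    using A sym by (simp_all add: map_mat_transpose)
  have "?B *\<^sub>v conjugate v = conjugate (?B *\<^sub>v v)"
    using A v(1) by (intro eq_vecI) (auto simp: scalar_prod_def sum_conjugate conjugate_dist_mul)
  then have "v \<bullet> (?B *\<^sub>v conjugate v) = cnj a * (v \<bullet>c v)"
    using v(1) by (simp add: Bv conjugate_smult_vec)
  moreover have "v \<bullet> (?B *\<^sub>v conjugate v) = a * (v \<bullet>c v)"
    using transpose_vec_mult_scalar[OF B carrier_vec_conjugate[OF v(1)] v(1)] v(1)
    by (simp add: Bt Bv)
  moreover have "v \<bullet>c v \<noteq> 0"
    using v by simp
  ultimately have "cnj a = a"
    by simp
  then show ?thesis
    by (simp add: Reals_cnj_iff)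
qed

lemma abs_diff_add_abs_add:
  fixes x y :: "'a::linordered_idom"
  shows "\<bar>x - y\<bar> + \<bar>x + y\<bar> = 2 * max \<bar>x\<bar> \<bar>y\<bar>"
  by (simp add: abs_if max_def)

lemma norm_diff_add_norm_add_of_real:
  assumes "a \<in> \<real>"
  shows "cmod (a - of_real c) + cmod (a + of_real c) = 2 * max (cmod a) \<bar>c\<bar>"
proof -
  obtain r where "a = of_real r"
    using assms by (auto elim: Reals_cases)
  then show ?thesis
    using abs_diff_add_abs_add[of r c] by (simp flip: of_real_diff of_real_add)
qed

lemma eigenvalues_mset_union_loop_adj:
  "eigenvalues_mset (union_loop_adj n E) =
    eigenvalues_mset (adj_mat n E) + image_mset (\<lambda>a. a + 1) (eigenvalues_mset (adj_mat n E))"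
proof -
  have A: "adj_mat n E \<in> carrier_mat n n"
    by (simp add: adj_mat_def)
  moreover have "1 \<cdot>\<^sub>m 1\<^sub>m n = (1\<^sub>m n :: real mat)"
    by (rule eq_matI) auto
  ultimately show ?thesis
    using eigenvalues_mset_add_scalar_mat[OF A, of 1]
    by (simp add: union_loop_adj_def eigenvalues_mset_four_block_diag)
qed

lemma loop_energy_union_loop_adj:
  "loop_energy (union_loop_adj n E) n =
    (\<Sum>a\<in>#eigenvalues_mset (adj_mat n E). cmod (a - 1/2) + cmod (a + 1/2))"
proof -
  let ?X = "eigenvalues_mset (adj_mat n E)"
  let ?c = "complex_of_real (real n / real (dim_row (union_loop_adj n E)))"
  \<comment> \<open>For n = 0 the shift is 0 / 0 = 0 rather than 1/2, but then there are no eigenvalues.\<close>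
  have c: "?c = 1/2" if "?X \<noteq> {#}"
  proof -
    have "size ?X = n"
      by (rule size_eigenvalues_mset) (simp add: adj_mat_def)
    with that have "n \<noteq> 0"
      by (metis size_eq_0_iff_empty)
    then show ?thesis
      by (simp add: union_loop_adj_def adj_mat_def)
  qed
  have "loop_energy (union_loop_adj n E) n = (\<Sum>a\<in>#?X. cmod (a - ?c) + cmod (a + 1 - ?c))"
    unfolding loop_energy_def eigenvalues_mset_union_loop_adj
    by (simp add: multiset.map_comp o_def sum_mset.distrib)
  also have "\<dots> = (\<Sum>a\<in>#?X. cmod (a - 1/2) + cmod (a + 1/2))"
  proof (cases "?X = {#}")
    case False
    have half: "a + 1 - 1/2 = a + 1/2" for a :: complex
      by simp
    show ?thesis
      unfolding c[OF False] half ..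
  qed simp
  finally show ?thesis .
qed

theorem theorem1:
  fixes n :: nat and E :: "nat \<Rightarrow> nat \<Rightarrow> bool"
  assumes "simple_graph n E"
    and "\<forall>x\<in>#eigenvalues_mset (adj_mat n E). cmod x \<ge> 1/2"
  shows "loop_energy (union_loop_adj n E) n = 2 * energy (adj_mat n E)"
proof -
  let ?A = "adj_mat n E"
  have A: "?A \<in> carrier_mat n n"
    by (simp add: adj_mat_def)
  have sym: "transpose_mat ?A = ?A"
    using assms(1) by (auto simp: adj_mat_def simple_graph_def)
  have "cmod (a - 1/2) + cmod (a + 1/2) = 2 * cmod a" if a: "a \<in># eigenvalues_mset ?A" for a
  proof -
    have "cmod a \<ge> 1/2"
      using assms(2) a by blast
    then show ?thesis
      using norm_diff_add_norm_add_of_real[OF eigenvalues_mset_symmetric_real[OF A sym a], of "1/2"]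
      by simp
  qed
  then have "(\<Sum>a\<in>#eigenvalues_mset ?A. cmod (a - 1/2) + cmod (a + 1/2)) =
      (\<Sum>a\<in>#eigenvalues_mset ?A. 2 * cmod a)"
    by (intro arg_cong[where f = sum_mset] image_mset_cong)
  then show ?thesis
    by (simp add: loop_energy_union_loop_adj energy_def sum_mset_distrib_left multiset.map_comp o_def)
qed

end
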